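(* Let $G$ be a finite EPO group. Then $\mathcal{S}(G)$ is cyclically separable if and only if either $pq$ divides $|G|$ for some primes $p > q \geq 5$, or at least two of the following three conditions hold: (i) $p$ divides $|G|$ for some prime $p \geq 5$; (ii) $3$ divides $|G|$ and $G$ has a Sylow $3$-subgroup which is not cyclic or is not normal in $G$; (iii) $2$ divides $|G|$ and $G$ has a Sylow $2$-subgroup which is not cyclic or is not normal in $G$.
   Context: A finite group is an EPO group if every non-identity element has prime order. All graphs are simple and undirected. For a finite group $G$, the order supergraph $\mathcal{S}(G)$ is the graph with vertex set $G$ in which two distinct vertices $x,y$ are adjacent if and only if the order of $x$ divides the order of $y$ or the order of $y$ divides the order of $x$. For a graph $\Gamma$, a vertex cutset is a set $S$ of vertices such that $\Gamma - S$ is disconnected; a cyclic vertex cutset is a vertex cutset $S$ such that $\Gamma - S$ has at least two connected components each of which contains a cycle. $\Gamma$ is called cyclically separable if it has a cyclic vertex cutset. *)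

theory Defs
  imports "HOL-Algebra.Algebra" "HOL-Computational_Algebra.Primes"
begin

definition EPO_group :: "('a, 'b) monoid_scheme \<Rightarrow> bool" where
  "EPO_group G \<longleftrightarrow> group G \<and>
     (\<forall>x \<in> carrier G. x \<noteq> \<one>\<^bsub>G\<^esub> \<longrightarrow> Factorial_Ring.prime (group.ord G x))"

definition sylow_subgroup :: "('a, 'b) monoid_scheme \<Rightarrow> nat \<Rightarrow> 'a set \<Rightarrow> bool" where
  "sylow_subgroup G p P \<longleftrightarrow> subgroup P G \<and> card P = p ^ multiplicity p (order G)"

section \<open>Simple graphs given by a vertex set and a symmetric irreflexive adjacency\<close>

definition graph_reach :: "'v set \<Rightarrow> ('v \<Rightarrow> 'v \<Rightarrow> bool) \<Rightarrow> 'v \<Rightarrow> 'v \<Rightarrow> bool" where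
  "graph_reach V E = (\<lambda>a b. a \<in> V \<and> b \<in> V \<and> E a b)\<^sup>*\<^sup>*"

definition graph_components :: "'v set \<Rightarrow> ('v \<Rightarrow> 'v \<Rightarrow> bool) \<Rightarrow> 'v set set" where
  "graph_components V E = {{y \<in> V. graph_reach V E x y} | x. x \<in> V}"

definition has_cycle :: "'v set \<Rightarrow> ('v \<Rightarrow> 'v \<Rightarrow> bool) \<Rightarrow> bool" where
  "has_cycle C E \<longleftrightarrow> (\<exists>xs. distinct xs \<and> length xs \<ge> 3 \<and> set xs \<subseteq> C \<and>
      (\<forall>i. Suc i < length xs \<longrightarrow> E (xs ! i) (xs ! Suc i)) \<and> E (last xs) (hd xs))"

definition vertex_cutset :: "'v set \<Rightarrow> ('v \<Rightarrow> 'v \<Rightarrow> bool) \<Rightarrow> 'v set \<Rightarrow> bool" where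
  "vertex_cutset V E S \<longleftrightarrow> S \<subseteq> V \<and> (\<exists>C1 C2. C1 \<in> graph_components (V - S) E \<and>
      C2 \<in> graph_components (V - S) E \<and> C1 \<noteq> C2)"

definition cyclic_vertex_cutset :: "'v set \<Rightarrow> ('v \<Rightarrow> 'v \<Rightarrow> bool) \<Rightarrow> 'v set \<Rightarrow> bool" where
  "cyclic_vertex_cutset V E S \<longleftrightarrow> vertex_cutset V E S \<and>
     (\<exists>C1 C2. C1 \<in> graph_components (V - S) E \<and> C2 \<in> graph_components (V - S) E \<and>
        C1 \<noteq> C2 \<and> has_cycle C1 E \<and> has_cycle C2 E)"

definition cyclically_separable :: "'v set \<Rightarrow> ('v \<Rightarrow> 'v \<Rightarrow> bool) \<Rightarrow> bool" where
  "cyclically_separable V E \<longleftrightarrow> (\<exists>S. cyclic_vertex_cutset V E S)"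

text \<open>Adjacency of the order supergraph S(G) (vertex set: carrier G).\<close>
definition order_supergraph_adj :: "('a, 'b) monoid_scheme \<Rightarrow> 'a \<Rightarrow> 'a \<Rightarrow> bool" where
  "order_supergraph_adj G x y \<longleftrightarrow> x \<noteq> y \<and>
     (group.ord G x dvd group.ord G y \<or> group.ord G y dvd group.ord G x)"

end

theory Submission
  imports Defs
begin

text \<open>
  In an EPO group two non-identity elements are adjacent in \<open>S(G)\<close> exactly when they have the
  same (prime) order, while the identity is adjacent to every vertex. So \<open>S(G)\<close> is a cone over
  the disjoint union of the cliques \<open>{x. ord x = p}\<close>; the apex lies in every cutset, and
  \<open>S(G)\<close> is cyclically separable iff at least two of these cliques have three or more vertices.

  For a prime \<open>p \<ge> 5\<close> dividing \<open>|G|\<close> the non-identity powers of an element of order \<open>p\<close>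
  already give \<open>p - 1 \<ge> 4\<close> elements of order \<open>p\<close>. For every prime \<open>p\<close> dividing \<open>|G|\<close>,
  there are at most \<open>p - 1\<close> elements of order \<open>p\<close> iff a Sylow \<open>p\<close>-subgroup \<open>P\<close> is cyclic and
  normal: then \<open>|P| = p\<close>, and a normal subgroup of index prime to \<open>p\<close> contains every element of
  order \<open>p\<close>; conversely, if there are few elements of order \<open>p\<close>, a Sylow subgroup is forced
  to be \<open>{1} \<union> {x. ord x = p}\<close>, which has order \<open>p\<close> and is closed under conjugation. Finally two involutions always produce a third, so for
  \<open>p = 2\<close> "at most 1" and "fewer than 3" agree.
\<close>

section \<open>Cones over disjoint cliques\<close>

lemma graph_reach_refl: "graph_reach V E a a"
  unfolding graph_reach_def by simp

lemma graph_reach_edge: "a \<in> V \<Longrightarrow> b \<in> V \<Longrightarrow> E a b \<Longrightarrow> graph_reach V E a b"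
  unfolding graph_reach_def by (rule r_into_rtranclp) simp

lemma graph_reach_trans:
  "graph_reach V E a b \<Longrightarrow> graph_reach V E b c \<Longrightarrow> graph_reach V E a c"
  unfolding graph_reach_def by (rule rtranclp_trans)

lemma graph_reach_sym:
  assumes "\<And>x y. x \<in> V \<Longrightarrow> y \<in> V \<Longrightarrow> E x y \<Longrightarrow> E y x"
    and "graph_reach V E a b"
  shows "graph_reach V E b a"
proof -
  have "symp (\<lambda>a b. a \<in> V \<and> b \<in> V \<and> E a b)" using assms(1) by (auto simp: symp_def)
  then have "symp (graph_reach V E)"
    unfolding graph_reach_def by (rule symp_rtranclp)
  then show ?thesis
    using assms(2) by (rule sympD)
qed

lemma graph_reach_invariant:
  assumes "\<And>x y. x \<in> V \<Longrightarrow> y \<in> V \<Longrightarrow> E x y \<Longrightarrow> f x = f y"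
    and "graph_reach V E a b"
  shows "f b = f a"
  using assms(2) unfolding graph_reach_def
  by (induction rule: rtranclp_induct) (auto dest: assms(1))

lemma graph_components_subset: "C \<in> graph_components V E \<Longrightarrow> C \<subseteq> V"
  unfolding graph_components_def by auto

lemma graph_components_nonempty: "C \<in> graph_components V E \<Longrightarrow> C \<noteq> {}"
  unfolding graph_components_def using graph_reach_refl by fastforce

lemma graph_components_eqI:
  assumes sym: "\<And>x y. x \<in> V \<Longrightarrow> y \<in> V \<Longrightarrow> E x y \<Longrightarrow> E y x"
    and C: "C \<in> graph_components V E" and D: "D \<in> graph_components V E"
    and a: "a \<in> C" and b: "b \<in> D" and ab: "graph_reach V E a b"
  shows "C = D"
proof -
  obtain c where c: "C = {y \<in> V. graph_reach V E c y}"
    using C unfolding graph_components_def by blast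
  obtain d where d: "D = {y \<in> V. graph_reach V E d y}"
    using D unfolding graph_components_def by blast
  have "graph_reach V E c a" "graph_reach V E d b"
    using a b c d by simp_all
  have cd: "graph_reach V E c d"
    using graph_reach_trans[OF graph_reach_trans[OF \<open>graph_reach V E c a\<close> ab]
        graph_reach_sym[OF sym \<open>graph_reach V E d b\<close>]] .
  have "graph_reach V E c y \<longleftrightarrow> graph_reach V E d y" for y
    using graph_reach_trans[OF cd, of y] graph_reach_trans[OF graph_reach_sym[OF sym cd], of y]
    by blast
  then show ?thesis using c d by simp
qed

lemma has_cycle_triangle:
  assumes "{x, y, z} \<subseteq> C" "distinct [x, y, z]" "E x y" "E y z" "E z x"
  shows "has_cycle C E"
  unfolding has_cycle_def
proof (intro exI[of _ "[x, y, z]"] conjI allI impI)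
  fix i assume "Suc i < length [x, y, z]"
  then have "i = 0 \<or> i = 1" by auto
  then show "E ([x, y, z] ! i) ([x, y, z] ! Suc i)" using assms by auto
qed (use assms in auto)

lemma universal_vertex_in_cutset:
  assumes sym: "\<And>x y. x \<in> V \<Longrightarrow> y \<in> V \<Longrightarrow> E x y \<Longrightarrow> E y x"
    and e: "e \<in> V" "\<And>x. x \<in> V \<Longrightarrow> x \<noteq> e \<Longrightarrow> E e x"
    and C: "C \<in> graph_components (V - S) E" and D: "D \<in> graph_components (V - S) E"
    and "C \<noteq> D"
  shows "e \<in> S"
proof (rule ccontr)
  assume "e \<notin> S"
  have reach: "graph_reach (V - S) E e x" if "x \<in> V - S" for x
  proof (cases "x = e")
    case False
    then show ?thesis using that e \<open>e \<notin> S\<close> by (intro graph_reach_edge) auto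
  qed (simp add: graph_reach_refl)
  obtain a where a: "a \<in> C"
    using C graph_components_nonempty by blast
  obtain b where b: "b \<in> D"
    using D graph_components_nonempty by blast
  have "a \<in> V - S" "b \<in> V - S"
    using a b graph_components_subset[OF C] graph_components_subset[OF D] by blast+
  have sym': "\<And>x y. x \<in> V - S \<Longrightarrow> y \<in> V - S \<Longrightarrow> E x y \<Longrightarrow> E y x"
    using sym by blast
  have "graph_reach (V - S) E a b"
    using graph_reach_sym[OF sym' reach[OF \<open>a \<in> V - S\<close>]] reach[OF \<open>b \<in> V - S\<close>]
    by (rule graph_reach_trans)
  then show False
    using graph_components_eqI[OF sym' C D a b] \<open>C \<noteq> D\<close> by blast
qed

lemma has_cycle_imp_three_le_card_fibre:
  assumes "finite C" "has_cycle C E"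
    and inv: "\<And>x y. x \<in> C \<Longrightarrow> y \<in> C \<Longrightarrow> E x y \<Longrightarrow> f x = f y"
  shows "\<exists>a \<in> C. 3 \<le> card {x \<in> C. f x = f a}"
proof -
  obtain xs where xs: "distinct xs" "3 \<le> length xs" "set xs \<subseteq> C"
      "\<And>i. Suc i < length xs \<Longrightarrow> E (xs ! i) (xs ! Suc i)"
    using assms(2) unfolding has_cycle_def by blast
  have const: "f (xs ! i) = f (xs ! 0)" if "i < length xs" for i
    using that
  proof (induction i)
    case (Suc i)
    then have "xs ! i \<in> C" "xs ! Suc i \<in> C" using xs(3) by auto
    moreover have "E (xs ! i) (xs ! Suc i)"
      using xs(4) Suc.prems by simp
    ultimately have "f (xs ! Suc i) = f (xs ! i)"
      using inv by simp
    then show ?case using Suc by simp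
  qed simp
  have "set xs \<subseteq> {x \<in> C. f x = f (xs ! 0)}"
    using xs(3) const by (auto simp: in_set_conv_nth)
  then have "card (set xs) \<le> card {x \<in> C. f x = f (xs ! 0)}"
    using \<open>finite C\<close> by (intro card_mono) auto
  then have "3 \<le> card {x \<in> C. f x = f (xs ! 0)}"
    using xs(2) distinct_card[OF xs(1)] by simp
  moreover have "xs ! 0 \<in> set xs" using xs(2) by (intro nth_mem) linarith
  then have "xs ! 0 \<in> C" using xs(3) by blast
  ultimately show ?thesis by blast
qed

lemma has_cycle_component_of_clique:
  assumes "K \<subseteq> W" "3 \<le> card K" "\<And>x y. x \<in> K \<Longrightarrow> y \<in> K \<Longrightarrow> x \<noteq> y \<Longrightarrow> E x y" "a \<in> K"
  shows "has_cycle {y \<in> W. graph_reach W E a y} E"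
proof -
  obtain T where "T \<subseteq> K" "card T = 3"
    using obtain_subset_with_card_n[OF assms(2)] by blast
  then obtain x y z where "{x, y, z} \<subseteq> K" "distinct [x, y, z]"
    by (auto simp: card_3_iff)
  moreover have "K \<subseteq> {y \<in> W. graph_reach W E a y}"
  proof
    fix x assume "x \<in> K"
    then show "x \<in> {y \<in> W. graph_reach W E a y}"
      using assms graph_reach_refl[of W E a] graph_reach_edge[of a W x E] by (cases "x = a") auto
  qed
  ultimately show ?thesis
    using assms(3) by (intro has_cycle_triangle[of x y z]) auto
qed

locale cone_over_cliques =
  fixes V :: "'v set" and E :: "'v \<Rightarrow> 'v \<Rightarrow> bool" and apex :: 'v and label :: "'v \<Rightarrow> 'l"
  assumes finite_vertices: "finite V" and apex_vertex: "apex \<in> V"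
    and label_apex: "x \<in> V \<Longrightarrow> label x = label apex \<Longrightarrow> x = apex"
    and adj_iff: "x \<in> V \<Longrightarrow> y \<in> V \<Longrightarrow>
      E x y \<longleftrightarrow> x \<noteq> y \<and> (x = apex \<or> y = apex \<or> label x = label y)"
begin

abbreviation fibre :: "'l \<Rightarrow> 'v set" where
  "fibre u \<equiv> {x \<in> V. label x = u}"

lemma adj_sym: "x \<in> V \<Longrightarrow> y \<in> V \<Longrightarrow> E x y \<Longrightarrow> E y x"
  using adj_iff[of x y] adj_iff[of y x] by auto

lemma adj_apex: "x \<in> V \<Longrightarrow> x \<noteq> apex \<Longrightarrow> E apex x"
  using adj_iff[of apex x] apex_vertex by auto

lemma adj_if_same_label: "x \<in> V \<Longrightarrow> y \<in> V \<Longrightarrow> x \<noteq> y \<Longrightarrow> label x = label y \<Longrightarrow> E x y"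
  using adj_iff[of x y] by auto

lemma same_label_if_adj: "x \<in> V - {apex} \<Longrightarrow> y \<in> V - {apex} \<Longrightarrow> E x y \<Longrightarrow> label x = label y"
  using adj_iff[of x y] by auto

lemma fibre_subset_if_three_le_card:
  assumes "3 \<le> card (fibre u)"
  shows "fibre u \<subseteq> V - {apex}"
proof (rule ccontr)
  assume "\<not> ?thesis"
  then have "fibre u \<subseteq> {apex}" using label_apex by auto
  then have "card (fibre u) \<le> 1" using card_mono[of "{apex}"] by simp
  then show False using assms by simp
qed

lemma large_fibre_in_cyclic_component:
  assumes "apex \<in> S" and K: "K \<in> graph_components (V - S) E" "has_cycle K E"
  shows "\<exists>a \<in> K. 3 \<le> card (fibre (label a))"
proof -
  have "K \<subseteq> V - {apex}"
    using graph_components_subset[OF K(1)] \<open>apex \<in> S\<close> by blast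
  then obtain a where "a \<in> K" "3 \<le> card {x \<in> K. label x = label a}"
    using has_cycle_imp_three_le_card_fibre[OF finite_subset K(2), of V label]
      same_label_if_adj finite_vertices by blast
  moreover have "card {x \<in> K. label x = label a} \<le> card (fibre (label a))"
    using finite_vertices \<open>K \<subseteq> V - {apex}\<close> by (intro card_mono) auto
  ultimately show ?thesis using le_trans by blast
qed

lemma two_large_fibres_if_cyclically_separable:
  assumes "cyclically_separable V E"
  shows "\<exists>u w. u \<noteq> w \<and> 3 \<le> card (fibre u) \<and> 3 \<le> card (fibre w)"
proof -
  obtain S C D where C: "C \<in> graph_components (V - S) E" and D: "D \<in> graph_components (V - S) E"
    and "C \<noteq> D" and cycles: "has_cycle C E" "has_cycle D E"
    using assms unfolding cyclically_separable_def cyclic_vertex_cutset_def by blast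
  have sym: "\<And>x y. x \<in> V - S \<Longrightarrow> y \<in> V - S \<Longrightarrow> E x y \<Longrightarrow> E y x"
    using adj_sym by blast
  have "apex \<in> S"
    using universal_vertex_in_cutset[OF adj_sym apex_vertex adj_apex C D \<open>C \<noteq> D\<close>] .
  then obtain a b where a: "a \<in> C" "3 \<le> card (fibre (label a))"
    and b: "b \<in> D" "3 \<le> card (fibre (label b))"
    using large_fibre_in_cyclic_component[OF _ C cycles(1)]
      large_fibre_in_cyclic_component[OF _ D cycles(2)] by blast
  have "a \<in> V - S" "b \<in> V - S"
    using a b graph_components_subset[OF C] graph_components_subset[OF D] by blast+
  have "label a \<noteq> label b"
  proof
    assume "label a = label b"
    have "graph_reach (V - S) E a b"
    proof (cases "a = b")
      case False
      then show ?thesis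
        using \<open>a \<in> V - S\<close> \<open>b \<in> V - S\<close> \<open>label a = label b\<close> adj_if_same_label
        by (intro graph_reach_edge) auto
    qed (simp add: graph_reach_refl)
    then show False
      using graph_components_eqI[OF sym C D a(1) b(1)] \<open>C \<noteq> D\<close> by blast
  qed
  then show ?thesis
    using a b by blast
qed

lemma cyclically_separable_if_two_large_fibres:
  assumes "u \<noteq> w" and large: "3 \<le> card (fibre u)" "3 \<le> card (fibre w)"
  shows "cyclically_separable V E"
proof -
  define W where "W = V - {apex}"
  define component where "component a = {y \<in> W. graph_reach W E a y}" for a
  have fibres: "fibre u \<subseteq> W" "fibre w \<subseteq> W"
    unfolding W_def using fibre_subset_if_three_le_card large by simp_all
  have "fibre u \<noteq> {}" "fibre w \<noteq> {}"
    using large by (metis card.empty not_numeral_le_zero)+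
  then obtain a b where a: "a \<in> V" "label a = u" and b: "b \<in> V" "label b = w"
    by blast
  have "a \<in> W" "b \<in> W" using a b fibres by blast+
  have components: "component a \<in> graph_components W E" "component b \<in> graph_components W E"
    unfolding component_def graph_components_def using \<open>a \<in> W\<close> \<open>b \<in> W\<close> by auto
  have "has_cycle (component a) E"
    unfolding component_def
    by (rule has_cycle_component_of_clique[OF fibres(1) large(1)]) (use adj_if_same_label a in auto)
  moreover have "has_cycle (component b) E"
    unfolding component_def
    by (rule has_cycle_component_of_clique[OF fibres(2) large(2)]) (use adj_if_same_label b in auto)
  moreover have "b \<notin> component a"
    unfolding component_def using graph_reach_invariant[of W E label a b] same_label_if_adj a b
      \<open>u \<noteq> w\<close> unfolding W_def by auto
  moreover have "b \<in> component b"
    unfolding component_def using \<open>b \<in> W\<close> graph_reach_refl by fast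
  ultimately have "cyclic_vertex_cutset V E {apex}"
    unfolding cyclic_vertex_cutset_def vertex_cutset_def using components apex_vertex
    unfolding W_def by blast
  then show ?thesis
    unfolding cyclically_separable_def by blast
qed

lemma cyclically_separable_iff:
  "cyclically_separable V E \<longleftrightarrow> (\<exists>u w. u \<noteq> w \<and> 3 \<le> card (fibre u) \<and> 3 \<le> card (fibre w))"
  using two_large_fibres_if_cyclically_separable cyclically_separable_if_two_large_fibres by blast

end


section \<open>Elements of given order\<close>

lemma sylow_subgroup_subgroup: "sylow_subgroup G p P \<Longrightarrow> subgroup P G"
  by (simp add: sylow_subgroup_def)

context group
begin

definition elements_of_order :: "nat \<Rightarrow> 'a set" where
  "elements_of_order n = {x \<in> carrier G. ord x = n}"

lemma conj_nat_pow:
  assumes "g \<in> carrier G" "h \<in> carrier G"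
  shows "(g \<otimes> h \<otimes> inv g) [^] (n::nat) = g \<otimes> h [^] n \<otimes> inv g"
proof (induction n)
  case (Suc n)
  have cancel: "inv g \<otimes> (g \<otimes> x) = x" if "x \<in> carrier G" for x
    using assms that by (simp add: m_assoc[symmetric])
  show ?case
    using Suc assms by (simp add: m_assoc cancel)
qed (use assms in simp)

lemma conj_eq_one_iff:
  "g \<in> carrier G \<Longrightarrow> h \<in> carrier G \<Longrightarrow> g \<otimes> h \<otimes> inv g = \<one> \<longleftrightarrow> h = \<one>"
  by (simp add: inv_solve_right')

lemma ord_conj:
  assumes "g \<in> carrier G" "h \<in> carrier G"
  shows "ord (g \<otimes> h \<otimes> inv g) = ord h"
proof -
  have "(g \<otimes> h \<otimes> inv g) [^] n = \<one> \<longleftrightarrow> h [^] n = \<one>" for n :: nat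
    using assms by (simp add: conj_nat_pow conj_eq_one_iff)
  then show ?thesis
    using assms by (simp add: ord_unique pow_eq_id)
qed

lemma ord_eq_2_iff:
  assumes "w \<in> carrier G"
  shows "ord w = 2 \<longleftrightarrow> w \<noteq> \<one> \<and> w \<otimes> w = \<one>"
proof -
  have "w \<otimes> w = \<one> \<longleftrightarrow> ord w dvd 2"
    using assms pow_eq_id[of w 2] by (simp add: numeral_2_eq_2)
  moreover have "ord w dvd 2 \<longleftrightarrow> ord w = 1 \<or> ord w = 2"
    using dvd_imp_le[of "ord w" 2] by (auto simp: le_Suc_eq numeral_2_eq_2)
  ultimately show ?thesis
    using ord_eq_1[OF assms] by auto
qed

lemma exists_third_involution:
  assumes y: "y \<in> elements_of_order 2" and z: "z \<in> elements_of_order 2" and "y \<noteq> z"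
  shows "\<exists>w \<in> elements_of_order 2. w \<noteq> y \<and> w \<noteq> z"
proof -
  have carr: "y \<in> carrier G" "z \<in> carrier G" and "ord y = 2"
    using y z by (auto simp: elements_of_order_def)
  then have invol: "y \<noteq> \<one>" "y \<otimes> y = \<one>" "z \<noteq> \<one>" "z \<otimes> z = \<one>"
    using y z ord_eq_2_iff by (auto simp: elements_of_order_def)
  have inv_z: "inv z = z"
    using carr invol by (simp add: inv_equality)
  show ?thesis
  proof (cases "z \<otimes> y \<otimes> inv z = y")
    case False
    have "ord (z \<otimes> y \<otimes> inv z) = 2"
      using carr ord_conj \<open>ord y = 2\<close> by simp
    moreover have "z \<otimes> y \<otimes> inv z \<noteq> z"
    proof
      assume "z \<otimes> y \<otimes> inv z = z"
      then have "z \<otimes> y = z \<otimes> z"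
        using carr by (simp add: inv_solve_right')
      then show False
        using carr \<open>y \<noteq> z\<close> by simp
    qed
    moreover have "z \<otimes> y \<otimes> inv z \<in> carrier G"
      using carr by simp
    ultimately show ?thesis
      using False unfolding elements_of_order_def by blast
  next
    case True
    then have comm: "z \<otimes> y = y \<otimes> z"
      using carr by (simp add: inv_solve_right')
    have "y \<otimes> z \<otimes> (y \<otimes> z) = y \<otimes> (z \<otimes> y) \<otimes> z"
      using carr by (simp add: m_assoc)
    also have "\<dots> = \<one>"
      using carr invol by (simp add: comm m_assoc)
    finally have "y \<otimes> z \<otimes> (y \<otimes> z) = \<one>" .
    moreover have "y \<otimes> z \<noteq> \<one>"
    proof
      assume "y \<otimes> z = \<one>"
      then have "inv z = y" using carr by (simp add: inv_equality)
      then show False using inv_z \<open>y \<noteq> z\<close> by simp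
    qed
    moreover have "y \<otimes> z \<noteq> y" "y \<otimes> z \<noteq> z"
      using carr invol by auto
    ultimately show ?thesis
      using carr ord_eq_2_iff[of "y \<otimes> z"] by (auto simp: elements_of_order_def)
  qed
qed

lemma card_elements_of_order_2_neq_2:
  assumes "finite (carrier G)"
  shows "card (elements_of_order 2) \<noteq> 2"
proof
  assume "card (elements_of_order 2) = 2"
  then obtain y z where yz: "elements_of_order 2 = {y, z}" "y \<noteq> z"
    by (auto simp: card_2_iff)
  then obtain w where "w \<in> elements_of_order 2" "w \<noteq> y" "w \<noteq> z"
    using exists_third_involution[of y z] by blast
  then show False using yz by blast
qed

lemma card_elements_of_prime_order_ge:
  assumes fin: "finite (carrier G)" and x: "x \<in> carrier G" and p: "Factorial_Ring.prime (ord x)"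
  shows "ord x - 1 \<le> card (elements_of_order (ord x))"
proof -
  let ?H = "generate G {x}"
  have "?H - {\<one>} \<subseteq> elements_of_order (ord x)"
  proof
    fix y assume y: "y \<in> ?H - {\<one>}"
    then obtain k :: int where k: "y = x [^] k"
      using generate_pow[OF x] by blast
    have "y \<in> carrier G" using k x by simp
    have "y [^] int (ord x) = x [^] (k * int (ord x))"
      using k x by (simp add: int_pow_pow)
    also have "\<dots> = \<one>"
      using x by (simp add: int_pow_eq_id)
    finally have "ord y dvd ord x"
      using int_pow_eq_id[OF \<open>y \<in> carrier G\<close>] by simp
    moreover have "ord y \<noteq> 1"
      using y ord_eq_1[OF \<open>y \<in> carrier G\<close>] by simp
    ultimately have "ord y = ord x"
      using p unfolding prime_nat_iff by blast
    then show "y \<in> elements_of_order (ord x)"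
      using \<open>y \<in> carrier G\<close> by (simp add: elements_of_order_def)
  qed
  moreover have "finite ?H" "\<one> \<in> ?H"
    using generate_incl[of "{x}"] x fin finite_subset generate.one by auto
  then have "card (?H - {\<one>}) = ord x - 1"
    using generate_pow_card[OF x] by simp
  moreover have "finite (elements_of_order (ord x))"
    using fin by (simp add: elements_of_order_def)
  ultimately show ?thesis
    by (metis card_mono)
qed

lemma cyclic_subgroup_iff_generate:
  assumes "subgroup H G"
  shows "cyclic_group (G\<lparr>carrier := H\<rparr>) \<longleftrightarrow> (\<exists>x \<in> H. H = generate G {x})"
proof -
  interpret H: group "G\<lparr>carrier := H\<rparr>"
    using subgroup_imp_group[OF assms] .
  have "range (\<lambda>n::int. x [^]\<^bsub>G\<lparr>carrier := H\<rparr>\<^esub> n) = generate G {x}" if "x \<in> H" for x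
    using int_pow_consistent[OF assms that] generate_pow[OF subgroup.mem_carrier[OF assms that]]
    by auto
  then show ?thesis
    using H.cyclic_group by auto
qed

lemma cyclic_if_card_eq_ord:
  assumes sub: "subgroup H G" and "finite H" and x: "x \<in> H" and "ord x = card H"
  shows "cyclic_group (G\<lparr>carrier := H\<rparr>)"
proof -
  have "generate G {x} \<subseteq> H"
    using generate_subgroup_incl[OF _ sub] x by simp
  moreover have "card (generate G {x}) = card H"
    using generate_pow_card[of x] x subgroup.subset[OF sub] \<open>ord x = card H\<close> by auto
  ultimately have "H = generate G {x}"
    using \<open>finite H\<close> by (intro card_subset_eq[symmetric])
  then show ?thesis
    using cyclic_subgroup_iff_generate[OF sub] x by blast
qed

lemma exists_sylow_subgroup:
  assumes "finite (carrier G)" "Factorial_Ring.prime p"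
  shows "\<exists>P. sylow_subgroup G p P"
proof -
  define a where "a = multiplicity p (order G)"
  have "order G = p ^ a * (order G div p ^ a)"
    unfolding a_def by (simp add: multiplicity_dvd)
  then show ?thesis
    using sylow_thm[OF assms(2) is_group _ assms(1)] unfolding sylow_subgroup_def a_def by blast
qed

text \<open>The image of \<open>y\<close> in \<open>G/N\<close> has order dividing both \<open>ord y\<close> and \<open>|G:N|\<close>.\<close>
lemma normal_subgroup_contains_if_coprime_index:
  assumes N: "N \<lhd> G" and fin: "finite (carrier G)" and y: "y \<in> carrier G"
    and coprime: "coprime (ord y) (card (rcosets N))"
  shows "y \<in> N"
proof -
  interpret normal N G using N .
  interpret F: group "G Mod N" using factorgroup_is_group .
  define m where "m = card (rcosets N)"
  have "m * card N = order G"
    unfolding m_def using lagrange[OF subgroup_axioms] .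
  then have "m \<noteq> 0"
    using fin order_gt_0_iff_finite by (metis mult_is_0 not_less_zero)
  have "order (G Mod N) = m"
    unfolding order_def m_def FactGroup_def by simp
  then have "(N #> y) [^]\<^bsub>G Mod N\<^esub> m = \<one>\<^bsub>G Mod N\<^esub>"
    using F.pow_order_eq_1 y rcosetsI[OF subset y] by (simp add: FactGroup_def)
  then have "N #> (y [^] m) = N"
    using FactGroup_pow[OF y] by (simp add: FactGroup_def)
  then have ym: "y [^] m \<in> N"
    using coset_join1[OF _ _ subgroup_axioms] y by simp
  obtain u v where "m * u = ord y * v + gcd m (ord y)"
    using bezout_nat[OF \<open>m \<noteq> 0\<close>] by blast
  then have uv: "m * u = ord y * v + 1"
    using coprime by (simp add: coprime_iff_gcd_eq_1 gcd.commute m_def)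
  have "(y [^] m) [^] u = y"
    using y by (simp add: nat_pow_pow uv nat_pow_mult[symmetric] pow_eq_id)
  moreover have "(y [^] m) [^] u \<in> N"
    using ym subgroup_int_pow_closed[OF subgroup_axioms ym, of "int u"] by (simp add: int_pow_int)
  ultimately show ?thesis by simp
qed

lemma sylow_subgroup_index_not_dvd:
  assumes fin: "finite (carrier G)" and p: "Factorial_Ring.prime p" and P: "sylow_subgroup G p P"
  shows "\<not> p dvd card (rcosets P)"
proof
  assume "p dvd card (rcosets P)"
  moreover have "card (rcosets P) * p ^ multiplicity p (order G) = order G"
    using lagrange[of P] P unfolding sylow_subgroup_def by simp
  ultimately have "p ^ Suc (multiplicity p (order G)) dvd order G"
    by (metis mult_dvd_mono dvd_refl power_Suc)
  moreover have "order G \<noteq> 0"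
    using fin order_gt_0_iff_finite by simp
  ultimately have "Suc (multiplicity p (order G)) \<le> multiplicity p (order G)"
    using p by (intro multiplicity_geI) (auto simp: not_prime_unit)
  then show False by simp
qed

lemma exists_nontrivial_elem:
  assumes "finite H" "\<one> \<in> H" "card H \<noteq> 1"
  obtains x where "x \<in> H" "x \<noteq> \<one>"
proof -
  have "\<not> H \<subseteq> {\<one>}"
  proof
    assume "H \<subseteq> {\<one>}"
    then have "H = {\<one>}" using assms(2) by blast
    then show False using assms(3) by simp
  qed
  then show ?thesis using that by blast
qed

end


section \<open>Primes\<close>

lemma prime_3_nat: "Factorial_Ring.prime (3::nat)"
proof -
  have "{2..<3::nat} = {2}" by auto
  then show ?thesis by (simp add: prime_nat_iff')
qed

lemma prime_nat_cases:
  assumes "Factorial_Ring.prime (p::nat)"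
  shows "p = 2 \<or> p = 3 \<or> 5 \<le> p"
proof -
  have "p \<noteq> 4"
  proof
    assume "p = 4"
    then have "2 = p"
      using primes_dvd_imp_eq[OF two_is_prime_nat assms] by simp
    then show False using \<open>p = 4\<close> by simp
  qed
  then show ?thesis
    using prime_ge_2_nat[OF assms] by linarith
qed

lemma dvd_iff_prime_product_dvd:
  assumes "Factorial_Ring.prime p" "Factorial_Ring.prime q" "p \<noteq> q"
  shows "p * q dvd (n::nat) \<longleftrightarrow> p dvd n \<and> q dvd n"
  using dvd_mult_left[of p q n] dvd_mult_right[of p q n]
    divides_mult[OF _ _ primes_coprime[OF assms], of n] by blast

lemma exists_two_primes_cases:
  fixes B :: "nat \<Rightarrow> bool"
  assumes prime: "\<And>p. B p \<Longrightarrow> Factorial_Ring.prime p"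
  shows "(\<exists>p q. p \<noteq> q \<and> B p \<and> B q) \<longleftrightarrow>
    (\<exists>p q. Factorial_Ring.prime p \<and> Factorial_Ring.prime q \<and> p > q \<and> q \<ge> 5 \<and> B p \<and> B q) \<or>
    ((\<exists>p. Factorial_Ring.prime p \<and> p \<ge> 5 \<and> B p) \<and> B 3) \<or>
    ((\<exists>p. Factorial_Ring.prime p \<and> p \<ge> 5 \<and> B p) \<and> B 2) \<or> (B 3 \<and> B 2)"
    (is "?lhs \<longleftrightarrow> ?rhs")
proof
  assume ?lhs
  then obtain p q where "p \<noteq> q" "B p" "B q" by blast
  then have primes: "Factorial_Ring.prime p" "Factorial_Ring.prime q"
    using prime by blast+
  consider "5 \<le> p" "5 \<le> q" | "p = 2 \<or> p = 3" | "q = 2 \<or> q = 3"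
    using prime_nat_cases[OF primes(1)] prime_nat_cases[OF primes(2)] by blast
  then show ?rhs
  proof cases
    case 1
    then show ?thesis
      using primes \<open>p \<noteq> q\<close> \<open>B p\<close> \<open>B q\<close> linorder_neqE_nat by blast
  next
    case 2
    then show ?thesis
      using prime_nat_cases[OF primes(2)] primes \<open>p \<noteq> q\<close> \<open>B p\<close> \<open>B q\<close> by auto
  next
    case 3
    then show ?thesis
      using prime_nat_cases[OF primes(1)] primes \<open>p \<noteq> q\<close> \<open>B p\<close> \<open>B q\<close> by auto
  qed
next
  assume ?rhs
  then show ?lhs
  proof (elim disjE conjE exE)
    fix p q assume "q < p" "B p" "B q"
    then show ?lhs by (intro exI[of _ p] exI[of _ q]) simp
  next
    fix p assume "5 \<le> p" "B p" "B 3"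
    then show ?lhs by (intro exI[of _ p] exI[of _ 3]) simp
  next
    fix p assume "5 \<le> p" "B p" "B 2"
    then show ?lhs by (intro exI[of _ p] exI[of _ 2]) simp
  next
    assume "B 3" "B 2"
    then show ?lhs by (intro exI[of _ 3] exI[of _ 2]) simp
  qed
qed


section \<open>Finite EPO groups\<close>

locale finite_EPO_group = group G for G (structure) +
  assumes finite_carrier: "finite (carrier G)"
    and prime_ord: "x \<in> carrier G \<Longrightarrow> x \<noteq> \<one> \<Longrightarrow> Factorial_Ring.prime (ord x)"

lemma finite_EPO_groupI: "finite (carrier G) \<Longrightarrow> EPO_group G \<Longrightarrow> finite_EPO_group G"
  unfolding EPO_group_def finite_EPO_group_def finite_EPO_group_axioms_def by blast

context finite_EPO_group
begin

lemma finite_elements_of_order: "finite (elements_of_order n)"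
  using finite_carrier by (simp add: elements_of_order_def)

lemma elements_of_order_1: "elements_of_order 1 = {\<one>}"
  using ord_eq_1 by (auto simp: elements_of_order_def)

lemma three_le_card_elements_of_order_imp:
  assumes "3 \<le> card (elements_of_order n)"
  shows "Factorial_Ring.prime n \<and> n dvd order G"
proof -
  have "n \<noteq> 1" using assms elements_of_order_1 by auto
  obtain x where "x \<in> elements_of_order n"
    using assms by (metis all_not_in_conv card.empty not_numeral_le_zero)
  then have "x \<in> carrier G" "ord x = n" "x \<noteq> \<one>"
    using \<open>n \<noteq> 1\<close> by (auto simp: elements_of_order_def)
  then show ?thesis
    using prime_ord ord_dvd_group_order by blast
qed

lemma ord_sylow:
  assumes p: "Factorial_Ring.prime p" and P: "sylow_subgroup G p P" and x: "x \<in> P" "x \<noteq> \<one>"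
  shows "ord x = p"
proof -
  have sub: "subgroup P G" using P by (simp add: sylow_subgroup_def)
  then have "x \<in> carrier G" using x subgroup.subset by blast
  interpret P: group "G\<lparr>carrier := P\<rparr>"
    using subgroup_imp_group[OF sub] .
  have "x [^] card P = \<one>"
    using P.pow_order_eq_1[of x] x nat_pow_consistent[of x] by (simp add: order_def)
  then have "ord x dvd card P"
    using pow_eq_id[OF \<open>x \<in> carrier G\<close>] by simp
  then have "ord x dvd p ^ multiplicity p (order G)"
    using P by (simp add: sylow_subgroup_def)
  then show ?thesis
    using prime_ord[OF \<open>x \<in> carrier G\<close> x(2)] p prime_dvd_power primes_dvd_imp_eq by blast
qed

lemma prime_dvd_card_sylow:
  assumes p: "Factorial_Ring.prime p" and "p dvd order G" and P: "sylow_subgroup G p P"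
  shows "p dvd card P"
proof -
  have "order G \<noteq> 0"
    using finite_carrier order_gt_0_iff_finite by simp
  then have "0 < multiplicity p (order G)"
    using multiplicity_gt_zero_iff[where x = "order G" and p = p] assms(2) p prime_gt_1_nat
    by force
  then show ?thesis
    using P by (simp add: sylow_subgroup_def)
qed

lemma exists_element_of_order:
  assumes p: "Factorial_Ring.prime p" and "p dvd order G"
  shows "\<exists>x \<in> carrier G. ord x = p"
proof -
  obtain P where P: "sylow_subgroup G p P"
    using exists_sylow_subgroup[OF finite_carrier p] by blast
  then have sub: "subgroup P G" by (rule sylow_subgroup_subgroup)
  then have "P \<subseteq> carrier G" "\<one> \<in> P"
    by (simp_all add: subgroup.subset subgroup.one_closed)
  then have "finite P"
    using finite_carrier finite_subset by blast
  moreover have "card P \<noteq> 1"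
    using prime_dvd_card_sylow[OF assms P] p by auto
  ultimately obtain x where "x \<in> P" "x \<noteq> \<one>"
    using exists_nontrivial_elem \<open>\<one> \<in> P\<close> by blast
  then show ?thesis
    using ord_sylow[OF p P] \<open>P \<subseteq> carrier G\<close> by blast
qed

lemma sylow_cyclic_normal_if_card_le:
  assumes p: "Factorial_Ring.prime p" and "p dvd order G" and P: "sylow_subgroup G p P"
    and few: "card (elements_of_order p) \<le> p - 1"
  shows "cyclic_group (G\<lparr>carrier := P\<rparr>) \<and> P \<lhd> G"
proof -
  have sub: "subgroup P G" using P by (rule sylow_subgroup_subgroup)
  have "\<one> \<notin> elements_of_order p"
    using p by (auto simp: elements_of_order_def)
  then have card_le: "card (insert \<one> (elements_of_order p)) \<le> p"
    using few finite_elements_of_order prime_gt_1_nat[OF p] by simp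
  have P_sub: "P \<subseteq> insert \<one> (elements_of_order p)"
    using ord_sylow[OF p P] subgroup.subset[OF sub] by (auto simp: elements_of_order_def)
  then have "card P \<le> p"
    using card_le card_mono[OF _ P_sub] finite_elements_of_order by (meson finite_insert le_trans)
  moreover have "p dvd card P" "card P \<noteq> 0"
    using prime_dvd_card_sylow[OF assms(1-3)] finite_carrier sub subgroup.one_closed
      finite_subset[OF subgroup.subset[OF sub]] by auto
  ultimately have card_P: "card P = p"
    using dvd_imp_le by (meson le_antisym not_gr0)
  then have P_eq: "P = insert \<one> (elements_of_order p)"
    using card_le P_sub finite_elements_of_order by (intro card_seteq) auto
  have normal: "P \<lhd> G"
    unfolding normal_inv_iff
  proof (intro conjI sub ballI)
    fix g h assume "g \<in> carrier G" "h \<in> P"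
    then show "g \<otimes> h \<otimes> inv g \<in> P"
      using P_eq ord_conj by (auto simp: elements_of_order_def)
  qed
  obtain x where x: "x \<in> P" "x \<noteq> \<one>"
    using exists_nontrivial_elem[of P] card_P prime_gt_1_nat[OF p] P_eq finite_elements_of_order
    by auto
  moreover have "finite P"
    using P_eq finite_elements_of_order by simp
  ultimately have "cyclic_group (G\<lparr>carrier := P\<rparr>)"
    using cyclic_if_card_eq_ord[OF sub _ x(1)] ord_sylow[OF p P x] card_P by simp
  with normal show ?thesis by blast
qed

lemma card_le_if_sylow_cyclic_normal:
  assumes p: "Factorial_Ring.prime p" and "p dvd order G" and P: "sylow_subgroup G p P"
    and cyclic: "cyclic_group (G\<lparr>carrier := P\<rparr>)" and normal: "P \<lhd> G"
  shows "card (elements_of_order p) \<le> p - 1"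
proof -
  have sub: "subgroup P G" using P by (rule sylow_subgroup_subgroup)
  obtain x where x: "x \<in> P" and P_eq: "P = generate G {x}"
    using cyclic cyclic_subgroup_iff_generate[OF sub] by blast
  have "x \<in> carrier G" using x subgroup.subset[OF sub] by blast
  have card_P: "card P = ord x"
    using generate_pow_card[OF \<open>x \<in> carrier G\<close>] P_eq by simp
  moreover have "card P \<noteq> 1"
    using prime_dvd_card_sylow[OF assms(1-3)] p by auto
  ultimately have "x \<noteq> \<one>" by auto
  then have "card P = p"
    using card_P ord_sylow[OF p P x] by simp
  have "elements_of_order p \<subseteq> P - {\<one>}"
  proof
    fix y assume y: "y \<in> elements_of_order p"
    then have "y \<in> carrier G" "ord y = p"
      by (auto simp: elements_of_order_def)
    moreover have "coprime p (card (rcosets P))"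
      using sylow_subgroup_index_not_dvd[OF finite_carrier p P] p by (simp add: prime_imp_coprime)
    ultimately have "y \<in> P"
      using normal_subgroup_contains_if_coprime_index[OF normal finite_carrier] by simp
    then show "y \<in> P - {\<one>}"
      using y p by (auto simp: elements_of_order_def)
  qed
  moreover have "finite P"
    using finite_carrier finite_subset subgroup.subset[OF sub] by blast
  ultimately show ?thesis
    using \<open>card P = p\<close> subgroup.one_closed[OF sub] card_mono[of "P - {\<one>}"] by fastforce
qed

lemma three_le_card_elements_of_order_iff_dvd:
  assumes p: "Factorial_Ring.prime p" and "5 \<le> p"
  shows "3 \<le> card (elements_of_order p) \<longleftrightarrow> p dvd order G"
proof
  assume "p dvd order G"
  then obtain x where "x \<in> carrier G" "ord x = p"
    using exists_element_of_order[OF p] by blast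
  then have "p - 1 \<le> card (elements_of_order p)"
    using card_elements_of_prime_order_ge[OF finite_carrier] p by blast
  then show "3 \<le> card (elements_of_order p)"
    using \<open>5 \<le> p\<close> by linarith
qed (use three_le_card_elements_of_order_imp in blast)

lemma exists_noncyclic_or_nonnormal_sylow_iff:
  assumes p: "Factorial_Ring.prime p" and "p dvd order G"
  shows "(\<exists>P. sylow_subgroup G p P \<and> (\<not> cyclic_group (G\<lparr>carrier := P\<rparr>) \<or> \<not> P \<lhd> G)) \<longleftrightarrow>
    \<not> card (elements_of_order p) \<le> p - 1"
proof
  assume "\<exists>P. sylow_subgroup G p P \<and> (\<not> cyclic_group (G\<lparr>carrier := P\<rparr>) \<or> \<not> P \<lhd> G)"
  then show "\<not> card (elements_of_order p) \<le> p - 1"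
    using sylow_cyclic_normal_if_card_le[OF assms] by blast
next
  assume "\<not> card (elements_of_order p) \<le> p - 1"
  moreover obtain P where "sylow_subgroup G p P"
    using exists_sylow_subgroup[OF finite_carrier p] by blast
  ultimately show "\<exists>P. sylow_subgroup G p P \<and> (\<not> cyclic_group (G\<lparr>carrier := P\<rparr>) \<or> \<not> P \<lhd> G)"
    using card_le_if_sylow_cyclic_normal[OF assms] by blast
qed

lemma three_le_card_elements_of_order_iff_sylow:
  assumes "p = 2 \<or> p = 3"
  shows "3 \<le> card (elements_of_order p) \<longleftrightarrow> p dvd order G \<and>
    (\<exists>P. sylow_subgroup G p P \<and> (\<not> cyclic_group (G\<lparr>carrier := P\<rparr>) \<or> \<not> P \<lhd> G))"
proof -
  have p: "Factorial_Ring.prime p"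
    using assms prime_3_nat by auto
  have "3 \<le> card (elements_of_order p) \<longleftrightarrow> \<not> card (elements_of_order p) \<le> p - 1"
    using assms
  proof
    assume "p = 2"
    then show ?thesis
      using card_elements_of_order_2_neq_2[OF finite_carrier] by (simp; presburger)
  qed auto
  then show ?thesis
    using exists_noncyclic_or_nonnormal_sylow_iff[OF p] three_le_card_elements_of_order_imp[of p] by blast
qed

lemma order_supergraph_adj_iff:
  assumes "x \<in> carrier G" "y \<in> carrier G"
  shows "order_supergraph_adj G x y \<longleftrightarrow> x \<noteq> y \<and> (x = \<one> \<or> y = \<one> \<or> ord x = ord y)"
proof (cases "x = \<one> \<or> y = \<one>")
  case False
  then have "Factorial_Ring.prime (ord x)" "Factorial_Ring.prime (ord y)"
    using assms prime_ord by auto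
  then have "ord x dvd ord y \<or> ord y dvd ord x \<longleftrightarrow> ord x = ord y"
    using primes_dvd_imp_eq by (metis dvd_refl)
  then show ?thesis
    using False unfolding order_supergraph_adj_def by simp
qed (auto simp: order_supergraph_adj_def)

lemma cyclically_separable_order_supergraph_iff:
  "cyclically_separable (carrier G) (order_supergraph_adj G) \<longleftrightarrow>
    (\<exists>p q. p \<noteq> q \<and> 3 \<le> card (elements_of_order p) \<and> 3 \<le> card (elements_of_order q))"
proof -
  interpret cone_over_cliques "carrier G" "order_supergraph_adj G" \<one> ord
    using finite_carrier ord_eq_1 order_supergraph_adj_iff by unfold_locales auto
  show ?thesis
    unfolding cyclically_separable_iff elements_of_order_def ..
qed

lemma exists_large_prime_iff:
  "(\<exists>p. Factorial_Ring.prime p \<and> p \<ge> 5 \<and> 3 \<le> card (elements_of_order p)) \<longleftrightarrow>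
    (\<exists>p. Factorial_Ring.prime p \<and> p \<ge> 5 \<and> p dvd order G)"
  using three_le_card_elements_of_order_iff_dvd by blast

lemma exists_large_prime_pair_iff:
  "(\<exists>p q. Factorial_Ring.prime p \<and> Factorial_Ring.prime q \<and> p > q \<and> q \<ge> 5 \<and>
      3 \<le> card (elements_of_order p) \<and> 3 \<le> card (elements_of_order q)) \<longleftrightarrow>
    (\<exists>p q. Factorial_Ring.prime p \<and> Factorial_Ring.prime q \<and> p > q \<and> q \<ge> 5 \<and> p * q dvd order G)"
proof -
  have "3 \<le> card (elements_of_order p) \<and> 3 \<le> card (elements_of_order q) \<longleftrightarrow> p * q dvd order G"
    if "Factorial_Ring.prime p" "Factorial_Ring.prime q" "p > q" "q \<ge> 5" for p q
    using that dvd_iff_prime_product_dvd[of p q "order G"]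
      three_le_card_elements_of_order_iff_dvd[of p] three_le_card_elements_of_order_iff_dvd[of q]
    by simp
  then show ?thesis
    by blast
qed

end

theorem mainTheorem4:
  fixes G :: "('a, 'b) monoid_scheme"
  assumes "group G" and "finite (carrier G)" and "EPO_group G"
  shows "cyclically_separable (carrier G) (order_supergraph_adj G) \<longleftrightarrow>
    ((\<exists>p q. Factorial_Ring.prime p \<and> Factorial_Ring.prime (q::nat) \<and> p > q \<and> q \<ge> 5 \<and> p * q dvd order G) \<or>
     (let c1 = (\<exists>p::nat. Factorial_Ring.prime p \<and> p \<ge> 5 \<and> p dvd order G);
          c2 = (3 dvd order G \<and> (\<exists>P. sylow_subgroup G 3 P \<and>
                  (\<not> cyclic_group (G\<lparr>carrier := P\<rparr>) \<or> \<not> P \<lhd> G)));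
          c3 = (2 dvd order G \<and> (\<exists>P. sylow_subgroup G 2 P \<and>
                  (\<not> cyclic_group (G\<lparr>carrier := P\<rparr>) \<or> \<not> P \<lhd> G)))
      in (c1 \<and> c2) \<or> (c1 \<and> c3) \<or> (c2 \<and> c3)))"
proof -
  interpret finite_EPO_group G
    using finite_EPO_groupI assms(2,3) .
  have "cyclically_separable (carrier G) (order_supergraph_adj G) \<longleftrightarrow>
    (\<exists>p q. p \<noteq> q \<and> 3 \<le> card (elements_of_order p) \<and> 3 \<le> card (elements_of_order q))"
    by (rule cyclically_separable_order_supergraph_iff)
  also have "\<dots> \<longleftrightarrow>
    (\<exists>p q. Factorial_Ring.prime p \<and> Factorial_Ring.prime q \<and> p > q \<and> q \<ge> 5 \<and>
      3 \<le> card (elements_of_order p) \<and> 3 \<le> card (elements_of_order q)) \<or>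
    ((\<exists>p. Factorial_Ring.prime p \<and> p \<ge> 5 \<and> 3 \<le> card (elements_of_order p)) \<and>
      3 \<le> card (elements_of_order 3)) \<or>
    ((\<exists>p. Factorial_Ring.prime p \<and> p \<ge> 5 \<and> 3 \<le> card (elements_of_order p)) \<and>
      3 \<le> card (elements_of_order 2)) \<or>
    (3 \<le> card (elements_of_order 3) \<and> 3 \<le> card (elements_of_order 2))"
    using three_le_card_elements_of_order_imp by (intro exists_two_primes_cases) blast
  finally show ?thesis
    unfolding Let_def exists_large_prime_iff exists_large_prime_pair_iff
      three_le_card_elements_of_order_iff_sylow[OF disjI1[OF refl]]
      three_le_card_elements_of_order_iff_sylow[OF disjI2[OF refl]] .
qed

end
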